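(* Let $\delta=(\delta_1,\dots,\delta_n)\in\{\mathsf{A},\mathsf{D}\}^n$ and let $I=(I_1,\dots,I_n)$ be an integer vector with $I_i\in[0,\tfrac{i(i-1)}{2}]$ for each $i$. If $\mathbf{i}\in R(w_0^{(n+1)})$ satisfies $\mathbf{i}\sim \mathbf{i}_\delta(I)$, then $\mathrm{ind}_\delta(\mathbf{i})=I$.
   Context: Let $R(w_0^{(n+1)})$ denote the set of reduced words $\mathbf{i}=(i_1,\dots,i_{\bar n})\in[n]^{\bar n}$ of the longest element $w_0^{(n+1)}$ of the symmetric group $\mathfrak{S}_{n+1}$ (generated by simple transpositions $s_1,\dots,s_n$), where $\bar n=n(n+1)/2$. A 2-move exchanges two consecutive letters $i,j$ with $|i-j|>1$; write $\mathbf{i}\sim\mathbf{i}'$ if $\mathbf{i}$ and $\mathbf{i}'$ are related by a sequence of 2-moves. Put $\mathsf{D}_n=(n,n-1,\dots,1)$ and $\mathsf{A}_n=(1,2,\dots,n)$. Every $\mathbf{i}\in R(w_0^{(n+1)})$ satisfies $\mathbf{i}\sim\mathbf{i}^-_{\mathsf{D}}\,\mathsf{D}_n\,\mathbf{i}^+_{\mathsf{D}}\sim\mathbf{i}^-_{\mathsf{A}}\,\mathsf{A}_n\,\mathbf{i}^+_{\mathsf{A}}$ for some words $\mathbf{i}^\pm_{\mathsf{D}},\mathbf{i}^\pm_{\mathsf{A}}$ (chosen minimal, i.e. using as few 2-moves as possible); the $\mathsf{D}$-index and $\mathsf{A}$-index are $\mathrm{ind}_{\mathsf{D}}(\mathbf{i})=|\mathbf{i}^+_{\mathsf{D}}|$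 and $\mathrm{ind}_{\mathsf{A}}(\mathbf{i})=|\mathbf{i}^+_{\mathsf{A}}|$. For a word $\mathbf{j}=(j_1,\dots,j_k)$ write $\mathbf{j}\pm1=(j_1\pm1,\dots,j_k\pm1)$. The contractions are $C_{\mathsf{D}}(\mathbf{i})=\mathbf{i}^-_{\mathsf{D}}(\mathbf{i}^+_{\mathsf{D}}-1)\in R(w_0^{(n)})$ and $C_{\mathsf{A}}(\mathbf{i})=(\mathbf{i}^-_{\mathsf{A}}-1)\mathbf{i}^+_{\mathsf{A}}\in R(w_0^{(n)})$. For $s\in[0,\bar n]$, writing $\mathbf{i}=\mathbf{i}^-(s)\,\mathbf{i}^+(s)$ with $|\mathbf{i}^+(s)|=s$, the extensions are $E_{\mathsf{D}}(s)(\mathbf{i})=\mathbf{i}^-(s)\,\mathsf{D}_{n+1}\,(\mathbf{i}^+(s)+1)$ and $E_{\mathsf{A}}(s)(\mathbf{i})=(\mathbf{i}^-(s)+1)\,\mathsf{A}_{n+1}\,\mathbf{i}^+(s)$, both in $R(w_0^{(n+2)})$. For $\delta=(\delta_1,\dots,\delta_n)\in\{\mathsf{A},\mathsf{D}\}^n$ and $I$ as in the claim, $\mathbf{i}_\delta(I)=(E_{\delta_n}(I_n)\circ\cdots\circ E_{\delta_1}(I_1))(\emptyset)\in R(w_0^{(n+1)})$. The $\delta$-index of $\mathbf{i}$ is $\mathrm{ind}_\delta(\mathbf{i})=(I_1,\dots,I_n)$ with $I_n=\mathrm{ind}_{\delta_n}(\mathbf{i})$, $I_{n-1}=\mathrm{ind}_{\delta_{n-1}}(C_{\delta_n}(\mathbf{i}))$,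 …, $I_1=\mathrm{ind}_{\delta_1}(C_{\delta_2}\circ\cdots\circ C_{\delta_n}(\mathbf{i}))$. *)

theory Defs
  imports Main
begin

definition sref :: "nat \<Rightarrow> nat \<Rightarrow> nat" where
  "sref i j = (if j = i then Suc i else if j = Suc i then i else j)"

definition word_prod :: "nat list \<Rightarrow> (nat \<Rightarrow> nat)" where
  "word_prod w = foldr (\<lambda>i f. sref i \<circ> f) w id"

definition w0 :: "nat \<Rightarrow> nat \<Rightarrow> nat" where
  "w0 n j = (if 1 \<le> j \<and> j \<le> Suc n then n + 2 - j else j)"

text \<open>R(w_0^{(n+1)}): words in [n]^{n(n+1)/2} whose product is w_0.
  (A word of length l(w_0) representing w_0 is automatically reduced.)\<close>
definition redw0 :: "nat \<Rightarrow> nat list set" where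
  "redw0 n = {w. length w = n * (n + 1) div 2 \<and> set w \<subseteq> {1..n} \<and> word_prod w = w0 n}"

definition move2 :: "nat list \<Rightarrow> nat list \<Rightarrow> bool" where
  "move2 u v \<longleftrightarrow> (\<exists>a b x y. u = a @ [x, y] @ b \<and> v = a @ [y, x] @ b \<and> (x + 1 < y \<or> y + 1 < x))"

abbreviation commeq :: "nat list \<Rightarrow> nat list \<Rightarrow> bool" (infix "\<sim>\<^sub>2" 50) where
  "u \<sim>\<^sub>2 v \<equiv> move2\<^sup>*\<^sup>* u v"

definition move_dist :: "nat list \<Rightarrow> nat list \<Rightarrow> nat" where
  "move_dist u v = (LEAST k. (move2 ^^ k) u v)"

definition Dw :: "nat \<Rightarrow> nat list" where "Dw n = rev [1..<Suc n]"
definition Aw :: "nat \<Rightarrow> nat list" where "Aw n = [1..<Suc n]"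

datatype dir = A | D

definition dword :: "dir \<Rightarrow> nat \<Rightarrow> nat list" where
  "dword d n = (case d of A \<Rightarrow> Aw n | D \<Rightarrow> Dw n)"

definition min_decomps :: "nat list \<Rightarrow> nat list \<Rightarrow> (nat list \<times> nat list) set" where
  "min_decomps P w = {(u, v). w \<sim>\<^sub>2 u @ P @ v \<and>
      (\<forall>u' v'. w \<sim>\<^sub>2 u' @ P @ v' \<longrightarrow> move_dist w (u @ P @ v) \<le> move_dist w (u' @ P @ v'))}"

definition decomp :: "dir \<Rightarrow> nat \<Rightarrow> nat list \<Rightarrow> nat list \<times> nat list" where
  "decomp d n w = (SOME p. p \<in> min_decomps (dword d n) w)"

definition ind :: "dir \<Rightarrow> nat \<Rightarrow> nat list \<Rightarrow> nat" where
  "ind d n w = length (snd (decomp d n w))"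

definition contr :: "dir \<Rightarrow> nat \<Rightarrow> nat list \<Rightarrow> nat list" where
  "contr d n w = (case decomp d n w of (u, v) \<Rightarrow>
     (case d of D \<Rightarrow> u @ map (\<lambda>x. x - 1) v | A \<Rightarrow> map (\<lambda>x. x - 1) u @ v))"

definition ext :: "dir \<Rightarrow> nat \<Rightarrow> nat \<Rightarrow> nat list \<Rightarrow> nat list" where
  "ext d n s w = (let u = take (length w - s) w; v = drop (length w - s) w in
     (case d of D \<Rightarrow> u @ Dw n @ map Suc v | A \<Rightarrow> map Suc u @ Aw n @ v))"

text \<open>i_delta(I) truncated to the first k letters of delta and I (deltas, I as lists,
  entry k-1 corresponding to delta_k, I_k).\<close>
fun iword :: "nat \<Rightarrow> dir list \<Rightarrow> nat list \<Rightarrow> nat list" where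
  "iword 0 ds Is = []"
| "iword (Suc k) ds Is = ext (ds ! k) (Suc k) (Is ! k) (iword k ds Is)"

fun ind_delta :: "nat \<Rightarrow> dir list \<Rightarrow> nat list \<Rightarrow> nat list" where
  "ind_delta 0 ds w = []"
| "ind_delta (Suc k) ds w =
     ind_delta k ds (contr (ds ! k) (Suc k) w) @ [ind (ds ! k) (Suc k) w]"

end

theory Submission
  imports Defs
begin

text \<open>Record for each letter of a word the pair of values it exchanges (its swap sequence).
  A 2-move only permutes the swaps of two different letters, so for every letter j the sequence
  of swaps of j is an invariant of the commutation class, and for a reduced word all swaps are
  distinct.  In E_D(s)(x) = u D_n (v + 1) the block D_n swaps the new largest value n + 1 with
  every other value, once for each letter.  If the word is also equivalent to u' D_n v', then
  the letter n cannot occur in u' (its swap would be repeated in the block), and the swap of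
  letter j in the block is the unique swap of j involving n + 1; hence u and u' contain each
  letter equally often.  As a word is determined up to 2-moves by its projections onto pairs of
  adjacent letters, this gives u \<sim> u' and v + 1 \<sim> v': every decomposition around D_n,
  minimal or not, has index s and contracts to x.  The A-case is the mirror image under the
  diagram flip j \<mapsto> n + 1 - j, and induction along \<delta> gives the theorem.\<close>

section \<open>Commutation classes\<close>

lemma move2_swap: "x + 1 < y \<or> y + 1 < x \<Longrightarrow> move2 (p @ x # y # q) (p @ y # x # q)"
  unfolding move2_def by fastforce

lemma move2_sym: "move2 u v \<Longrightarrow> move2 v u"
  unfolding move2_def by blast

lemma move2_append_context: "move2 u v \<Longrightarrow> move2 (p @ u @ q) (p @ v @ q)"
  unfolding move2_def by (metis append.assoc)

lemma commeq_sym: "u \<sim>\<^sub>2 v \<Longrightarrow> v \<sim>\<^sub>2 u"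
  by (metis move2_sym symp_rtranclp sympD sympI)

lemma commeq_invariant:
  assumes "u \<sim>\<^sub>2 v" and "\<And>a b. move2 a b \<Longrightarrow> F a = F b"
  shows "F u = F v"
  using assms(1) by induction (auto dest: assms(2))

lemma commeq_set: "u \<sim>\<^sub>2 v \<Longrightarrow> set u = set v"
  by (erule commeq_invariant) (auto simp: move2_def)

lemma commeq_length: "u \<sim>\<^sub>2 v \<Longrightarrow> length u = length v"
  by (erule commeq_invariant) (auto simp: move2_def)

lemma commeq_map:
  assumes "u \<sim>\<^sub>2 v" and "set u \<subseteq> S"
    and apart: "\<And>x y. x \<in> S \<Longrightarrow> y \<in> S \<Longrightarrow> x + 1 < y \<Longrightarrow> \<phi> x + 1 < \<phi> y \<or> \<phi> y + 1 < \<phi> x"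
  shows "map \<phi> u \<sim>\<^sub>2 map \<phi> v"
  using assms(1,2)
proof induction
  case (step y z)
  obtain a b p q where y: "y = a @ [p, q] @ b" and z: "z = a @ [q, p] @ b"
    and pq: "p + 1 < q \<or> q + 1 < p"
    using step.hyps(2) unfolding move2_def by blast
  have "p \<in> S" "q \<in> S"
    using step.prems commeq_set[OF step.hyps(1)] y by auto
  then have "\<phi> p + 1 < \<phi> q \<or> \<phi> q + 1 < \<phi> p"
    using pq apart by blast
  then have "move2 (map \<phi> y) (map \<phi> z)"
    using move2_swap[of "\<phi> p" "\<phi> q" "map \<phi> a"] by (auto simp: y z)
  with step.IH step.prems show ?case by (meson rtranclp.rtrancl_into_rtrancl)
qed simp

lemma commeq_append_context: "u \<sim>\<^sub>2 v \<Longrightarrow> p @ u @ q \<sim>\<^sub>2 p @ v @ q"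
  by (induction rule: rtranclp_induct)
    (auto dest: move2_append_context intro: rtranclp.rtrancl_into_rtrancl)

lemma commeq_append: "u \<sim>\<^sub>2 u' \<Longrightarrow> v \<sim>\<^sub>2 v' \<Longrightarrow> u @ v \<sim>\<^sub>2 u' @ v'"
  using commeq_append_context[of u u' "[]" v] commeq_append_context[of v v' u' "[]"]
  by (simp add: rtranclp_trans)

lemma commeq_Cons: "u \<sim>\<^sub>2 v \<Longrightarrow> a # u \<sim>\<^sub>2 a # v"
  using commeq_append_context[of u v "[a]" "[]"] by simp

lemma commeq_move_past:
  "\<forall>b\<in>set u. a + 1 < b \<or> b + 1 < a \<Longrightarrow> a # u @ v \<sim>\<^sub>2 u @ a # v"
proof (induction u)
  case (Cons c u)
  have "move2 (a # c # u @ v) (c # a # u @ v)"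
    using Cons.prems move2_swap[of a c "[]"] by simp
  moreover have "c # a # u @ v \<sim>\<^sub>2 c # u @ a # v"
    using Cons by (intro commeq_Cons) auto
  ultimately show ?case
    by (simp only: append_Cons converse_rtranclp_into_rtranclp)
qed simp

definition adj_proj :: "nat \<Rightarrow> nat list \<Rightarrow> nat list" where
  "adj_proj j w = filter (\<lambda>x. x = j \<or> x = Suc j) w"

lemma commeq_adj_proj: "u \<sim>\<^sub>2 v \<Longrightarrow> adj_proj j u = adj_proj j v"
  by (erule commeq_invariant) (auto simp: move2_def adj_proj_def)

lemma adj_proj_commeq: "(\<And>j. adj_proj j u = adj_proj j v) \<Longrightarrow> u \<sim>\<^sub>2 v"
proof (induction u arbitrary: v)
  case Nil
  then show ?case
    by (cases v) (auto simp: adj_proj_def dest: meta_spec[of _ "hd v"])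
next
  case (Cons a u)
  have "a \<in> set (adj_proj a v)"
    using Cons.prems[of a, symmetric] by (simp add: adj_proj_def)
  then obtain v1 v2 where v: "v = v1 @ a # v2" and "a \<notin> set v1"
    by (metis adj_proj_def filter_is_subset split_list_first subsetD)
  \<comment> \<open>the letters next to a cannot precede it in v, as they do not in a # u\<close>
  have v1: "adj_proj j v1 = []" if "a = j \<or> a = Suc j" for j
  proof (rule ccontr)
    assume "adj_proj j v1 \<noteq> []"
    then obtain c r where c: "adj_proj j v1 = c # r"
      by (cases "adj_proj j v1") auto
    have "adj_proj j (a # u) = a # adj_proj j u"
      using that by (simp add: adj_proj_def)
    then have "c = a"
      using Cons.prems[of j] c v by (simp add: adj_proj_def)
    moreover have "c \<in> set v1"
      using c unfolding adj_proj_def by (metis filter_is_subset list.set_intros(1) subsetD)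
    ultimately show False
      using \<open>a \<notin> set v1\<close> by simp
  qed
  have apart: "\<forall>b\<in>set v1. a + 1 < b \<or> b + 1 < a"
  proof
    fix b assume b: "b \<in> set v1"
    have "b \<noteq> a" "b \<noteq> Suc a"
      using v1[of a] b by (auto simp: adj_proj_def filter_empty_conv)
    moreover have "Suc b \<noteq> a"
      using v1[of b] b by (auto simp: adj_proj_def filter_empty_conv)
    ultimately show "a + 1 < b \<or> b + 1 < a"
      by arith
  qed
  have "adj_proj j u = adj_proj j (v1 @ v2)" for j
  proof (cases "a = j \<or> a = Suc j")
    case True
    then show ?thesis
      using Cons.prems[of j] v1[OF True] unfolding v by (auto simp: adj_proj_def)
  next
    case False
    then show ?thesis
      using Cons.prems[of j] unfolding v by (auto simp: adj_proj_def)
  qed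
  then have "a # u \<sim>\<^sub>2 a # v1 @ v2"
    by (simp add: Cons.IH commeq_Cons)
  also have "a # v1 @ v2 \<sim>\<^sub>2 v"
    using commeq_move_past[OF apart] v by simp
  finally show ?case .
qed

lemma commeq_cancel_middle:
  assumes "U @ P @ V \<sim>\<^sub>2 U' @ P @ V'" and "\<And>j. count_list U j = count_list U' j"
  shows "U \<sim>\<^sub>2 U'" "V \<sim>\<^sub>2 V'"
proof -
  have "length (adj_proj j w) = count_list w j + count_list w (Suc j)" for j w
    unfolding adj_proj_def by (induction w) auto
  then have "length (adj_proj j U) = length (adj_proj j U')" for j
    using assms(2) by simp
  moreover have "adj_proj j U @ adj_proj j P @ adj_proj j V
      = adj_proj j U' @ adj_proj j P @ adj_proj j V'" for j
    using commeq_adj_proj[OF assms(1), of j] unfolding adj_proj_def by simp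
  ultimately have "adj_proj j U = adj_proj j U' \<and> adj_proj j V = adj_proj j V'" for j
    by simp
  then show "U \<sim>\<^sub>2 U'" "V \<sim>\<^sub>2 V'"
    by (auto intro: adj_proj_commeq)
qed

section \<open>Swap sequences\<close>

lemma word_prod_Nil [simp]: "word_prod [] = id"
  by (simp add: word_prod_def)

lemma word_prod_Cons: "word_prod (j # w) = sref j \<circ> word_prod w"
  by (simp add: word_prod_def)

lemma word_prod_append: "word_prod (a @ b) = word_prod a \<circ> word_prod b"
  by (induction a) (simp_all add: word_prod_Cons comp_assoc)

lemma inj_sref: "inj (sref j)"
  unfolding sref_def inj_def by auto

lemma inj_word_prod: "inj (word_prod w)"
  by (induction w) (simp_all only: word_prod_Nil word_prod_Cons inj_compose inj_sref inj_on_id)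

lemma word_prod_fixes: "set w \<subseteq> {lo..hi} \<Longrightarrow> k \<notin> {lo..Suc hi} \<Longrightarrow> word_prod w k = k"
  by (induction w) (auto simp: word_prod_Cons sref_def)

lemma sref_image: "j \<in> {lo..hi} \<Longrightarrow> sref j ` {lo..Suc hi} = {lo..Suc hi}"
  unfolding sref_def by (auto simp: image_iff)

lemma word_prod_image: "set w \<subseteq> {lo..hi} \<Longrightarrow> word_prod w ` {lo..Suc hi} = {lo..Suc hi}"
proof (induction w)
  case (Cons j w)
  have "word_prod (j # w) ` {lo..Suc hi} = sref j ` word_prod w ` {lo..Suc hi}"
    by (simp add: word_prod_Cons image_comp)
  then show ?case
    using Cons by (simp add: sref_image)
qed simp

text \<open>For f = id the pairs are the inversions (as pairs of values) of the product, listed in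
  the order in which the word creates them.\<close>
fun swap_seq :: "(nat \<Rightarrow> nat) \<Rightarrow> nat list \<Rightarrow> (nat \<times> nat set) list" where
  "swap_seq f [] = []"
| "swap_seq f (j # w) = (j, {f j, f (Suc j)}) # swap_seq (f \<circ> sref j) w"

lemma swap_seq_append: "swap_seq f (a @ b) = swap_seq f a @ swap_seq (f \<circ> word_prod a) b"
  by (induction a arbitrary: f) (simp_all add: word_prod_Cons comp_assoc)

lemma map_fst_swap_seq: "map fst (swap_seq f w) = w"
  by (induction w arbitrary: f) auto

lemma length_filter_fst: "length (filter (\<lambda>p. fst p = j) ps) = count_list (map fst ps) j"
  by (induction ps) auto

lemma sref_commute: "x + 1 < y \<or> y + 1 < x \<Longrightarrow> sref x \<circ> sref y = sref y \<circ> sref x"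
  unfolding sref_def by (rule ext) auto

lemma move2_swap_seq:
  assumes "move2 u v"
  obtains A B p q where "swap_seq f u = A @ [p, q] @ B" "swap_seq f v = A @ [q, p] @ B"
    "fst p \<noteq> fst q"
proof -
  obtain a b x y where u: "u = a @ [x, y] @ b" and v: "v = a @ [y, x] @ b"
    and xy: "x + 1 < y \<or> y + 1 < x"
    using assms unfolding move2_def by blast
  define g where "g = f \<circ> word_prod a"
  have fixed: "sref x y = y" "sref x (Suc y) = Suc y" "sref y x = x" "sref y (Suc x) = Suc x"
    using xy unfolding sref_def by auto
  have "swap_seq f u = swap_seq f a @ [(x, {g x, g (Suc x)}), (y, {g y, g (Suc y)})]
      @ swap_seq (g \<circ> sref x \<circ> sref y) b"
    unfolding u swap_seq_append g_def using fixed by (simp add: word_prod_Cons comp_assoc)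
  moreover have "swap_seq f v = swap_seq f a @ [(y, {g y, g (Suc y)}), (x, {g x, g (Suc x)})]
      @ swap_seq (g \<circ> sref x \<circ> sref y) b"
    unfolding v swap_seq_append g_def using fixed sref_commute[OF xy]
    by (simp add: word_prod_Cons comp_assoc)
  moreover have "x \<noteq> y"
    using xy by auto
  ultimately show ?thesis
    using that by fastforce
qed

definition letter_swaps :: "nat \<Rightarrow> nat list \<Rightarrow> nat set list" where
  "letter_swaps j w = map snd (filter (\<lambda>p. fst p = j) (swap_seq id w))"

definition swap_pairs :: "nat list \<Rightarrow> nat set list" where
  "swap_pairs w = map snd (swap_seq id w)"

lemma commeq_letter_swaps: "u \<sim>\<^sub>2 v \<Longrightarrow> letter_swaps j u = letter_swaps j v"
  by (erule commeq_invariant, erule move2_swap_seq[where f = id]) (auto simp: letter_swaps_def)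

lemma commeq_swap_pairs:
  "u \<sim>\<^sub>2 v \<Longrightarrow>
    set (swap_pairs u) = set (swap_pairs v) \<and> distinct (swap_pairs u) = distinct (swap_pairs v)"
  by (erule commeq_invariant[where F = "\<lambda>w. (set (swap_pairs w), distinct (swap_pairs w))",
        simplified], erule move2_swap_seq[where f = id]) (auto simp: swap_pairs_def)

lemma Dw_Suc: "Dw (Suc n) = Suc n # Dw n"
  by (simp add: Dw_def)

lemma set_Dw [simp]: "set (Dw n) = {1..n}"
  by (auto simp: Dw_def)

lemma length_Dw [simp]: "length (Dw n) = n"
  by (simp add: Dw_def)

lemma distinct_Dw: "distinct (Dw n)"
  by (simp add: Dw_def)

lemma swap_seq_Dw: "swap_seq f (Dw n) = map (\<lambda>j. (j, {f j, f (Suc n)})) (Dw n)"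
proof (induction n arbitrary: f)
  case (Suc n)
  have "swap_seq (f \<circ> sref (Suc n)) (Dw n) = map (\<lambda>j. (j, {f j, f (Suc (Suc n))})) (Dw n)"
    unfolding Suc.IH by (rule map_cong) (auto simp: sref_def)
  then show ?case
    by (simp add: Dw_Suc sref_def)
qed (simp add: Dw_def)

lemma word_prod_Dw: "k \<in> {1..n} \<Longrightarrow> word_prod (Dw n) (Suc k) = k"
proof (induction n)
  case (Suc n)
  show ?case
  proof (cases "k = Suc n")
    case True
    then have "word_prod (Dw n) (Suc k) = Suc k"
      by (intro word_prod_fixes[of _ 1 n]) auto
    with True show ?thesis
      by (simp add: Dw_Suc word_prod_Cons sref_def)
  next
    case False
    with Suc show ?thesis
      by (simp add: Dw_Suc word_prod_Cons sref_def)
  qed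
qed simp

text \<open>Here \<tau> relabels positions and \<phi> letters, \<tau> conjugating s_j into s_(\<phi> j).\<close>
lemma swap_seq_conj:
  assumes "set w \<subseteq> {1..m}"
    and "\<And>j k. j \<in> {1..m} \<Longrightarrow> k \<in> {1..Suc m} \<Longrightarrow> \<tau> (sref j k) = sref (\<phi> j) (\<tau> k)"
    and "\<And>j. j \<in> {1..m} \<Longrightarrow> {\<tau> j, \<tau> (Suc j)} = {\<phi> j, Suc (\<phi> j)}"
    and "\<And>k. k \<in> {1..Suc m} \<Longrightarrow> g (\<tau> k) = \<rho> (f k)"
  shows "swap_seq g (map \<phi> w) = map (\<lambda>(j, l). (\<phi> j, \<rho> ` l)) (swap_seq f w)"
  using assms(1,4)
proof (induction w arbitrary: f g)
  case (Cons j w)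
  have j: "j \<in> {1..m}"
    using Cons.prems(1) by simp
  have "swap_seq (g \<circ> sref (\<phi> j)) (map \<phi> w)
      = map (\<lambda>(j, l). (\<phi> j, \<rho> ` l)) (swap_seq (f \<circ> sref j) w)"
  proof (rule Cons.IH)
    fix k assume k: "k \<in> {1..Suc m}"
    then have "sref j k \<in> {1..Suc m}"
      using j sref_image by blast
    then have "g (\<tau> (sref j k)) = \<rho> (f (sref j k))"
      by (rule Cons.prems(2))
    then show "(g \<circ> sref (\<phi> j)) (\<tau> k) = \<rho> ((f \<circ> sref j) k)"
      using assms(2)[OF j k] by simp
  qed (use Cons.prems(1) in simp)
  moreover have "{g (\<phi> j), g (Suc (\<phi> j))} = \<rho> ` {f j, f (Suc j)}"
  proof -
    have "{g (\<phi> j), g (Suc (\<phi> j))} = g ` {\<tau> j, \<tau> (Suc j)}"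
      using assms(3)[OF j] by simp
    also have "\<dots> = \<rho> ` {f j, f (Suc j)}"
      using Cons.prems(2) j by simp
    finally show ?thesis .
  qed
  ultimately show ?case
    by simp
qed simp

text \<open>The diagram automorphism s_j \<mapsto> s_(n+1-j) of S_(n+1); it exchanges D_n and A_n.\<close>
definition flip_letters :: "nat \<Rightarrow> nat list \<Rightarrow> nat list" where
  "flip_letters n w = map (\<lambda>j. Suc n - j) w"

lemma flip_letters_append [simp]: "flip_letters n (u @ v) = flip_letters n u @ flip_letters n v"
  by (simp add: flip_letters_def)

lemma flip_letters_flip_letters: "set w \<subseteq> {1..n} \<Longrightarrow> flip_letters n (flip_letters n w) = w"
  unfolding flip_letters_def by (induction w) auto

lemma set_flip_letters: "set w \<subseteq> {1..n} \<Longrightarrow> set (flip_letters n w) \<subseteq> {1..n}"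
  unfolding flip_letters_def by (auto simp: subset_iff)

lemma flip_letters_Dw: "flip_letters n (Dw n) = Aw n"
  unfolding flip_letters_def Dw_def Aw_def
  by (rule nth_equalityI) (auto simp: rev_nth simp del: upt_Suc)

lemma flip_letters_Aw: "flip_letters n (Aw n) = Dw n"
  using flip_letters_flip_letters[of "Dw n" n] by (simp add: flip_letters_Dw)

lemma commeq_flip_letters:
  "u \<sim>\<^sub>2 v \<Longrightarrow> set u \<subseteq> {1..n} \<Longrightarrow> flip_letters n u \<sim>\<^sub>2 flip_letters n v"
  unfolding flip_letters_def by (erule commeq_map) auto

lemma flip_letters_ext_D:
  assumes "set x \<subseteq> {1..m}"
  shows "flip_letters (Suc m) (ext D (Suc m) s x) = ext A (Suc m) s (flip_letters m x)"
proof -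
  have "\<forall>j\<in>set (take k x). Suc (Suc m) - j = Suc (Suc m - j)" for k
    using assms set_take_subset[of k x] by (auto simp: subset_iff)
  then show ?thesis
    unfolding ext_def flip_letters_def Let_def
    by (simp add: take_map drop_map flip_letters_Dw[unfolded flip_letters_def])
qed

section \<open>Reduced words of the longest element\<close>

text \<open>Reducedness is expressed by distinct swaps; m(m+1)/2 distinct pairs in {1..m+1} force the
  product to be w_0.\<close>
definition long_reduced :: "nat \<Rightarrow> nat list \<Rightarrow> bool" where
  "long_reduced m x \<longleftrightarrow> set x \<subseteq> {1..m} \<and> length x = m * (m + 1) div 2 \<and>
     distinct (swap_pairs x) \<and> (\<forall>l\<in>set (swap_pairs x). l \<subseteq> {1..Suc m})"

lemma long_reduced_commeq: "long_reduced m x \<Longrightarrow> x \<sim>\<^sub>2 y \<Longrightarrow> long_reduced m y"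
  using commeq_set commeq_length commeq_swap_pairs unfolding long_reduced_def by simp

lemma swap_seq_after_Dw:
  assumes "set v \<subseteq> {1..m}"
  shows "swap_seq (f \<circ> word_prod (Dw (Suc m))) (map Suc v)
    = map (\<lambda>(j, l). (Suc j, l)) (swap_seq f v)"
  using swap_seq_conj[where \<tau> = Suc and \<rho> = id, OF assms]
  by (simp add: sref_def word_prod_Dw)

lemma swap_seq_ext_D:
  assumes "set (u @ v) \<subseteq> {1..m}"
  shows "swap_seq id (u @ Dw (Suc m) @ map Suc v) = swap_seq id u
    @ map (\<lambda>j. (j, {word_prod u j, Suc (Suc m)})) (Dw (Suc m))
    @ map (\<lambda>(j, l). (Suc j, l)) (swap_seq (word_prod u) v)"
proof -
  have "word_prod u (Suc (Suc m)) = Suc (Suc m)"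
    using assms by (intro word_prod_fixes[of u 1 m]) auto
  then show ?thesis
    using swap_seq_after_Dw[of v m "word_prod u"] assms by (simp add: swap_seq_append swap_seq_Dw)
qed

lemma ext_D_eq: "ext D n s x = take (length x - s) x @ Dw n @ map Suc (drop (length x - s) x)"
  by (simp add: ext_def)

lemma distinct_insert_middle:
  "distinct (xs @ zs) \<Longrightarrow> distinct ys \<Longrightarrow> set ys \<inter> set (xs @ zs) = {} \<Longrightarrow> distinct (xs @ ys @ zs)"
  by auto

lemma distinct_map_pair_with:
  assumes "distinct xs" and "inj_on f (set xs)" and "c \<notin> f ` set xs"
  shows "distinct (map (\<lambda>j. {f j, c}) xs)"
  unfolding distinct_map
proof (intro conjI inj_onI)
  fix j k assume j: "j \<in> set xs" and k: "k \<in> set xs" and "{f j, c} = {f k, c}"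
  then have "f j \<in> {f k, c}"
    by blast
  then have "f j = f k"
    using assms(3) j by auto
  then show "j = k"
    using assms(2) j k by (auto dest: inj_onD)
qed (rule assms(1))

lemma long_reduced_ext_D:
  assumes x: "long_reduced m x"
  shows "long_reduced (Suc m) (ext D (Suc m) s x)"
proof -
  define u where "u = take (length x - s) x"
  define v where "v = drop (length x - s) x"
  let ?f = "word_prod u" and ?T = "Suc (Suc m)"
  let ?new = "map (\<lambda>j. {?f j, ?T}) (Dw (Suc m))"
  have uv: "x = u @ v" and sets: "set (u @ v) \<subseteq> {1..m}"
    using x by (auto simp: u_def v_def long_reduced_def)
  have ext: "ext D (Suc m) s x = u @ Dw (Suc m) @ map Suc v"
    by (simp add: ext_D_eq u_def v_def)
  have old: "swap_pairs x = map snd (swap_seq id u) @ map snd (swap_seq ?f v)"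
    by (simp add: swap_pairs_def uv swap_seq_append)
  have pairs: "swap_pairs (ext D (Suc m) s x)
      = map snd (swap_seq id u) @ ?new @ map snd (swap_seq ?f v)"
    using swap_seq_ext_D[OF sets] by (simp add: ext swap_pairs_def comp_def split_def)
  have f_range: "?f ` {1..Suc m} = {1..Suc m}"
    using word_prod_image[of u 1 m] sets by simp
  then have new_distinct: "distinct ?new"
    by (intro distinct_map_pair_with) (auto simp: distinct_Dw inj_on_subset[OF inj_word_prod])
  have new_range: "\<forall>l\<in>set ?new. ?T \<in> l \<and> l \<subseteq> {1..Suc (Suc m)}"
    using f_range by fastforce
  have old_range: "\<forall>l\<in>set (swap_pairs x). ?T \<notin> l \<and> l \<subseteq> {1..Suc (Suc m)}"
    using x unfolding long_reduced_def by fastforce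
  have "distinct (swap_pairs (ext D (Suc m) s x))"
    using x new_distinct new_range old_range unfolding pairs old long_reduced_def
    by (intro distinct_insert_middle) auto
  moreover have "\<forall>l\<in>set (swap_pairs (ext D (Suc m) s x)). l \<subseteq> {1..Suc (Suc m)}"
    using new_range old_range unfolding pairs old by auto
  moreover have "set (ext D (Suc m) s x) \<subseteq> {1..Suc m}"
    using sets by (auto simp: ext)
  moreover have "length (ext D (Suc m) s x) = Suc m * (Suc m + 1) div 2"
    using x by (simp add: ext_D_eq long_reduced_def)
  ultimately show ?thesis
    unfolding long_reduced_def by blast
qed

lemma swap_pairs_flip_letters:
  assumes "set x \<subseteq> {1..m}"
  shows "swap_pairs (flip_letters m x) = map (image (\<lambda>k. Suc (Suc m) - k)) (swap_pairs x)"
proof -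
  have "swap_seq id (map (\<lambda>j. Suc m - j) x)
      = map (\<lambda>(j, l). (Suc m - j, (\<lambda>k. Suc (Suc m) - k) ` l)) (swap_seq id x)"
    by (rule swap_seq_conj[OF assms]) (auto simp: sref_def)
  then show ?thesis
    by (simp add: swap_pairs_def flip_letters_def split_def comp_def)
qed

lemma long_reduced_flip_letters: "long_reduced m x \<Longrightarrow> long_reduced m (flip_letters m x)"
proof -
  let ?\<tau> = "\<lambda>k. Suc (Suc m) - k"
  assume x: "long_reduced m x"
  then have pairs: "set (swap_pairs x) \<subseteq> Pow {1..Suc m}" and sets: "set x \<subseteq> {1..m}"
    by (auto simp: long_reduced_def)
  have "inj_on ?\<tau> {1..Suc m}"
    by (rule inj_onI) auto
  then have "inj_on (image ?\<tau>) (set (swap_pairs x))"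
    using inj_on_image_Pow pairs inj_on_subset by blast
  moreover have "?\<tau> ` l \<subseteq> {1..Suc m}" if "l \<subseteq> {1..Suc m}" for l
    using that by (auto simp: subset_iff)
  ultimately show ?thesis
    using x set_flip_letters[OF sets] unfolding long_reduced_def swap_pairs_flip_letters[OF sets]
    by (auto simp: distinct_map flip_letters_def)
qed

lemma ext_A_eq_flip_letters:
  "set x \<subseteq> {1..m} \<Longrightarrow> ext A (Suc m) s x = flip_letters (Suc m) (ext D (Suc m) s (flip_letters m x))"
  using flip_letters_ext_D[OF set_flip_letters] flip_letters_flip_letters by metis

lemma long_reduced_ext: "long_reduced m x \<Longrightarrow> long_reduced (Suc m) (ext d (Suc m) s x)"
proof (cases d)
  case A
  assume x: "long_reduced m x"
  then have "long_reduced (Suc m) (ext D (Suc m) s (flip_letters m x))"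
    by (simp add: long_reduced_ext_D long_reduced_flip_letters)
  moreover have "set x \<subseteq> {1..m}"
    using x by (simp add: long_reduced_def)
  ultimately show ?thesis
    using A by (simp add: ext_A_eq_flip_letters long_reduced_flip_letters)
qed (simp add: long_reduced_ext_D)

lemma long_reduced_iword: "long_reduced k (iword k ds Is)"
  by (induction k) (simp_all add: long_reduced_ext, simp add: long_reduced_def swap_pairs_def)

section \<open>Decompositions of extended words\<close>

text \<open>An occurrence of the letter m + 1 before the block would swap a pair that the block, which
  swaps the image of m + 2 with all other values, swaps again.\<close>
lemma top_letter_notin_prefix:
  assumes "long_reduced (Suc m) (u @ Dw (Suc m) @ v)"
  shows "Suc m \<notin> set u"
proof
  let ?n = "Suc m"
  assume "?n \<in> set u"
  then obtain a b where u: "u = a @ ?n # b" and "?n \<notin> set b"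
    by (meson split_list_last)
  then have b: "set b \<subseteq> {1..m}"
    using assms unfolding long_reduced_def by (auto simp: subset_iff le_Suc_eq)
  define h where "h = word_prod a \<circ> sref ?n"
  define g where "g = h \<circ> word_prod b"
  have "g (Suc ?n) = word_prod a ?n"
    using word_prod_fixes[OF b, of "Suc ?n"] by (simp add: g_def h_def sref_def)
  moreover have "word_prod a (Suc ?n) \<in> g ` {1..?n}"
  proof -
    have "word_prod a (Suc ?n) = h ?n"
      by (simp add: h_def sref_def)
    also have "h ?n \<in> h ` word_prod b ` {1..?n}"
      using word_prod_image[OF b] by simp
    finally show ?thesis
      by (simp add: g_def image_comp)
  qed
  then obtain i where i: "i \<in> {1..?n}" "g i = word_prod a (Suc ?n)"
    by (metis imageE)
  ultimately have "{word_prod a ?n, word_prod a (Suc ?n)} \<in> set (map snd (swap_seq g (Dw ?n)))"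
    by (auto simp: swap_seq_Dw image_iff insert_commute intro!: bexI[of _ i])
  moreover have "swap_pairs (u @ Dw ?n @ v) = map snd (swap_seq id a)
      @ [{word_prod a ?n, word_prod a (Suc ?n)}] @ map snd (swap_seq h b)
      @ map snd (swap_seq g (Dw ?n)) @ map snd (swap_seq (g \<circ> word_prod (Dw ?n)) v)"
    by (simp add: swap_pairs_def u swap_seq_append word_prod_append word_prod_Cons g_def h_def
        comp_assoc)
  ultimately show False
    using assms unfolding long_reduced_def by auto
qed

lemma same_marker_position:
  assumes "xs @ [l] @ ys = xs' @ [l'] @ ys'" and "c \<in> l'" and "\<forall>y\<in>set xs \<union> set ys. c \<notin> y"
  shows "length xs' = length xs"
proof (rule ccontr)
  assume "length xs' \<noteq> length xs"
  then consider "length xs' < length xs" | "length xs < length xs'"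
    by linarith
  then show False
  proof cases
    case 1
    then have "l' = xs ! length xs'"
      using arg_cong[OF assms(1), of "\<lambda>zs. zs ! length xs'"] by (simp add: nth_append)
    with 1 assms(2,3) show False
      by (metis UnI1 nth_mem)
  next
    case 2
    then have "l' = ys ! (length xs' - Suc (length xs))"
      using arg_cong[OF assms(1), of "\<lambda>zs. zs ! length xs'"] by (simp add: nth_append)
    moreover have "length xs' - Suc (length xs) < length ys"
      using 2 arg_cong[OF assms(1), of length] by simp
    ultimately show False
      using assms(2,3) by (metis UnI2 nth_mem)
  qed
qed

lemma filter_Dw_block:
  "j \<in> {1..n} \<Longrightarrow> filter (\<lambda>p. fst p = j) (map (\<lambda>k. (k, G k)) (Dw n)) = [(j, G j)]"
  by (induction n) (auto simp: Dw_Suc filter_empty_conv)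

lemma letter_swaps_top_block:
  assumes "set u \<subseteq> {1..m}" and "j \<in> {1..Suc m}"
  shows "letter_swaps j (u @ Dw (Suc m) @ v)
    = map snd (filter (\<lambda>p. fst p = j) (swap_seq id u)) @ [{word_prod u j, Suc (Suc m)}]
      @ map snd (filter (\<lambda>p. fst p = j) (swap_seq (word_prod u \<circ> word_prod (Dw (Suc m))) v))"
proof -
  have "word_prod u (Suc (Suc m)) = Suc (Suc m)"
    using assms(1) by (intro word_prod_fixes[of _ 1 m]) auto
  then show ?thesis
    using assms(2) by (simp add: letter_swaps_def swap_seq_append swap_seq_Dw filter_Dw_block)
qed

text \<open>The swap of letter j inside the block D_(m+1) is the only swap of j involving the new
  value m + 2, so its rank among the swaps of j counts the occurrences of j before the block.\<close>
lemma count_before_top_block: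
  assumes x: "long_reduced m (u @ v)" and u': "set u' \<subseteq> {1..m}"
    and z: "u @ Dw (Suc m) @ map Suc v \<sim>\<^sub>2 u' @ Dw (Suc m) @ v'"
  shows "count_list u' j = count_list u j"
proof (cases "j \<in> {1..Suc m}")
  case False
  then have "j \<notin> set u" "j \<notin> set u'"
    using x u' unfolding long_reduced_def by auto
  then show ?thesis
    by simp
next
  case True
  let ?F = "\<lambda>ps. map snd (filter (\<lambda>p. fst p = j) ps)"
  have sets: "set u \<subseteq> {1..m}" "set v \<subseteq> {1..m}"
    using x by (auto simp: long_reduced_def)
  have "Suc (Suc m) \<notin> l"
    if "l \<in> set (?F (swap_seq id u))
      \<union> set (?F (swap_seq (word_prod u \<circ> word_prod (Dw (Suc m))) (map Suc v)))" for l
  proof -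
    have "l \<in> set (swap_pairs (u @ v))"
      using that by (force simp: swap_pairs_def swap_seq_append swap_seq_after_Dw[OF sets(2)])
    then show ?thesis
      using x unfolding long_reduced_def by fastforce
  qed
  moreover have "?F (swap_seq id u) @ [{word_prod u j, Suc (Suc m)}]
      @ ?F (swap_seq (word_prod u \<circ> word_prod (Dw (Suc m))) (map Suc v))
    = ?F (swap_seq id u') @ [{word_prod u' j, Suc (Suc m)}]
      @ ?F (swap_seq (word_prod u' \<circ> word_prod (Dw (Suc m))) v')"
    using commeq_letter_swaps[OF z, of j] letter_swaps_top_block[OF sets(1) True]
      letter_swaps_top_block[OF u' True] by simp
  ultimately have "length (?F (swap_seq id u')) = length (?F (swap_seq id u))"
    by (intro same_marker_position[where c = "Suc (Suc m)"]) blast+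
  then show ?thesis
    by (simp add: length_filter_fst map_fst_swap_seq)
qed

lemma ext_D_decomp:
  assumes x: "long_reduced m x" and s: "s \<le> length x"
    and z: "ext D (Suc m) s x \<sim>\<^sub>2 u' @ Dw (Suc m) @ v'"
  shows "length v' = s \<and> u' @ map (\<lambda>k. k - 1) v' \<sim>\<^sub>2 x"
proof -
  define u where "u = take (length x - s) x"
  define v where "v = drop (length x - s) x"
  have uv: "x = u @ v" and "length v = s"
    using s by (simp_all add: u_def v_def)
  have z: "u @ Dw (Suc m) @ map Suc v \<sim>\<^sub>2 u' @ Dw (Suc m) @ v'"
    using z by (simp add: ext_D_eq u_def v_def)
  have "long_reduced (Suc m) (u' @ Dw (Suc m) @ v')"
    using long_reduced_commeq[OF long_reduced_ext_D[OF x] assms(3)] .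
  then have "Suc m \<notin> set u'" and "set u' \<subseteq> {1..Suc m}"
    using top_letter_notin_prefix by (auto simp: long_reduced_def)
  then have "set u' \<subseteq> {1..m}"
    by (auto simp: subset_iff le_Suc_eq)
  then have "count_list u j = count_list u' j" for j
    using count_before_top_block[of m u v u' v' j] x z uv by simp
  then have u': "u \<sim>\<^sub>2 u'" and v': "map Suc v \<sim>\<^sub>2 v'"
    using commeq_cancel_middle[OF z] by blast+
  have "map (\<lambda>k. k - 1) (map Suc v) \<sim>\<^sub>2 map (\<lambda>k. k - 1) v'"
    by (rule commeq_map[OF v', of "{1..}"]) auto
  then have "v \<sim>\<^sub>2 map (\<lambda>k. k - 1) v'"
    by (simp add: comp_def)
  with u' have "u @ v \<sim>\<^sub>2 u' @ map (\<lambda>k. k - 1) v'"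
    by (rule commeq_append)
  then show ?thesis
    using commeq_length[OF v'] \<open>length v = s\<close> uv by (simp add: commeq_sym)
qed

lemma ext_A_decomp:
  assumes x: "long_reduced m x" and s: "s \<le> length x"
    and z: "ext A (Suc m) s x \<sim>\<^sub>2 u' @ Aw (Suc m) @ v'"
  shows "length v' = s \<and> map (\<lambda>k. k - 1) u' @ v' \<sim>\<^sub>2 x"
proof -
  let ?y = "flip_letters m x" and ?flip = "flip_letters (Suc m)"
  have sets: "set x \<subseteq> {1..m}"
    using x by (simp add: long_reduced_def)
  have y: "long_reduced m ?y"
    using x by (rule long_reduced_flip_letters)
  have ext: "ext A (Suc m) s x = ?flip (ext D (Suc m) s ?y)"
    using sets by (rule ext_A_eq_flip_letters)
  have ext_sets: "set (ext D (Suc m) s ?y) \<subseteq> {1..Suc m}"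
    using long_reduced_ext_D[OF y] by (simp add: long_reduced_def)
  then have z_sets: "set (u' @ Aw (Suc m) @ v') \<subseteq> {1..Suc m}"
    using commeq_set[OF z] ext set_flip_letters by metis
  have "?flip (ext A (Suc m) s x) \<sim>\<^sub>2 ?flip (u' @ Aw (Suc m) @ v')"
    using commeq_flip_letters[OF z] set_flip_letters[OF ext_sets] ext by metis
  then have "ext D (Suc m) s ?y \<sim>\<^sub>2 ?flip u' @ Dw (Suc m) @ ?flip v'"
    using ext_sets by (simp add: ext flip_letters_flip_letters flip_letters_Aw)
  then have "length (?flip v') = s \<and> ?flip u' @ map (\<lambda>k. k - 1) (?flip v') \<sim>\<^sub>2 ?y"
    using s by (intro ext_D_decomp[OF y]) (simp_all add: flip_letters_def)
  then have "length v' = s" and w: "?flip u' @ map (\<lambda>k. k - 1) (?flip v') \<sim>\<^sub>2 ?y"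
    by (simp_all add: flip_letters_def)
  moreover have "set (?flip u' @ map (\<lambda>k. k - 1) (?flip v')) \<subseteq> {1..m}"
    using commeq_set[OF w] y by (simp add: long_reduced_def)
  ultimately have "length v' = s" and
    "flip_letters m (?flip u' @ map (\<lambda>k. k - 1) (?flip v')) \<sim>\<^sub>2 flip_letters m ?y"
    using commeq_flip_letters by blast+
  moreover have "flip_letters m (?flip u' @ map (\<lambda>k. k - 1) (?flip v')) = map (\<lambda>k. k - 1) u' @ v'"
    using z_sets by (auto simp: flip_letters_def subset_iff intro!: map_idI)
  ultimately show ?thesis
    using sets by (simp add: flip_letters_flip_letters)
qed

lemma min_decomps_nonempty: "w \<sim>\<^sub>2 u @ P @ v \<Longrightarrow> \<exists>p. p \<in> min_decomps P w"
proof -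
  assume "w \<sim>\<^sub>2 u @ P @ v"
  then obtain p where "w \<sim>\<^sub>2 fst p @ P @ snd p"
    and "\<forall>q. w \<sim>\<^sub>2 fst q @ P @ snd q \<longrightarrow>
      move_dist w (fst p @ P @ snd p) \<le> move_dist w (fst q @ P @ snd q)"
    using ex_has_least_nat[where P = "\<lambda>p. w \<sim>\<^sub>2 fst p @ P @ snd p" and k = "(u, v)"
        and m = "\<lambda>p. move_dist w (fst p @ P @ snd p)"] by auto
  then show ?thesis
    unfolding min_decomps_def by (intro exI[of _ p]) (auto simp: case_prod_beta)
qed

lemma decomp_commeq:
  assumes "w \<sim>\<^sub>2 u @ dword d n @ v"
  shows "w \<sim>\<^sub>2 fst (decomp d n w) @ dword d n @ snd (decomp d n w)"
proof -
  have "decomp d n w \<in> min_decomps (dword d n) w"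
    unfolding decomp_def using min_decomps_nonempty[OF assms] by (rule someI_ex)
  then show ?thesis
    by (auto simp: min_decomps_def case_prod_beta)
qed

lemma ind_contr_ext:
  assumes x: "long_reduced m x" and s: "s \<le> length x" and w: "w \<sim>\<^sub>2 ext d (Suc m) s x"
  shows "ind d (Suc m) w = s \<and> contr d (Suc m) w \<sim>\<^sub>2 x"
proof -
  obtain u' v' where uv': "decomp d (Suc m) w = (u', v')"
    by fastforce
  have "\<exists>u v. ext d (Suc m) s x = u @ dword d (Suc m) @ v"
    by (cases d) (auto simp: ext_def dword_def Let_def)
  then have "w \<sim>\<^sub>2 u' @ dword d (Suc m) @ v'"
    using decomp_commeq w uv' by (metis fst_conv snd_conv rtranclp_trans)
  then have "ext d (Suc m) s x \<sim>\<^sub>2 u' @ dword d (Suc m) @ v'"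
    using commeq_sym[OF w] by (rule rtranclp_trans[rotated])
  then show ?thesis
    using ext_A_decomp[OF x s] ext_D_decomp[OF x s] uv'
    by (cases d) (simp_all add: ind_def contr_def dword_def)
qed

lemma ind_delta_iword:
  assumes "\<And>i. i < k \<Longrightarrow> Is ! i \<le> Suc i * i div 2" and "w \<sim>\<^sub>2 iword k ds Is"
  shows "ind_delta k ds w = map (\<lambda>i. Is ! i) [0..<k]"
  using assms
proof (induction k arbitrary: w)
  case (Suc k)
  have x: "long_reduced k (iword k ds Is)"
    by (rule long_reduced_iword)
  then have "Is ! k \<le> length (iword k ds Is)"
    using Suc.prems(1)[of k] by (simp add: long_reduced_def mult.commute)
  with x have "ind (ds ! k) (Suc k) w = Is ! k \<and> contr (ds ! k) (Suc k) w \<sim>\<^sub>2 iword k ds Is"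
    using Suc.prems(2) by (intro ind_contr_ext) simp_all
  then show ?case
    using Suc.IH Suc.prems(1) by simp
qed simp

theorem lemma4p10:
  fixes n :: nat and ds :: "dir list" and Is :: "nat list" and w :: "nat list"
  assumes "length ds = n" and "length Is = n"
    and "\<forall>i\<in>{1..n}. Is ! (i - 1) \<le> i * (i - 1) div 2"
    and "w \<in> redw0 n"
    and "w \<sim>\<^sub>2 iword n ds Is"
  shows "ind_delta n ds w = Is"
proof -
  have "Is ! i \<le> Suc i * i div 2" if "i < n" for i
    using assms(3)[rule_format, of "Suc i"] that by simp
  then have "ind_delta n ds w = map (\<lambda>i. Is ! i) [0..<n]"
    using assms(5) by (rule ind_delta_iword)
  then show ?thesis
    using assms(2) map_nth by metis
qed

end
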